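(* Let $\Pi$ be the set of graphs $G$ satisfying $\sum_{H:|V(H)|=4} w_H\cdot p(H,G)\le \frac{5}{16}$, where the weights are $w_{K_4}=1$, $w_{\bar{K_4}}=\frac12$, $w_{D_4}=\frac{5}{12}$, $w_{\bar{D_4}}=\frac{5}{12}$, $w_{P_3}=\frac13$, $w_{\bar{P_3}}=\frac16$, $w_{C_4}=\frac12$, $w_{\bar{C_4}}=\frac13$, $w_{K_{1,3}}=\frac14$, $w_{\bar{K_{1,3}}}=\frac14$, $w_{P_4}=\frac14$. Then $\Pi=\{G:\phi(G)\le 0\}$, where $\phi(G)=2\,t_{\mathrm{inj}}(C_4,G)-t_{\mathrm{inj}}(K_2,G)+\frac38$.
   Context: $K_4$ is the complete graph on 4 vertices, $D_4$ is $K_4$ minus an edge, $P_3$ is the 4-vertex graph consisting of a path on 3 vertices plus an isolated vertex, $C_4$ the 4-cycle, $P_4$ the path on 4 vertices, $K_{1,3}$ the star on 4 vertices, $K_2$ a single edge, and $\bar H$ the complement of $H$. $p(H,G)$ is the fraction of induced subgraphs of $G$ on $|V(H)|$ vertices isomorphic to $H$. For graphs $H$ on $h$ vertices and $G$ on $n$ vertices, $t_{\mathrm{inj}}(H,G)$ is the number of injective maps $\varphi:V(H)\to V(G)$ such that $uv\in E(H)$ implies $\varphi(u)\varphi(v)\in E(G)$, divided by $n(n-1)\cdots(n-h+1)$. *)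

theory Defs
  imports "HOL-Library.FuncSet" Complex_Main
begin

definition simple_graph :: "'a set \<Rightarrow> ('a \<Rightarrow> 'a \<Rightarrow> bool) \<Rightarrow> bool" where
  "simple_graph V E \<longleftrightarrow> finite V \<and> (\<forall>x y. E x y \<longrightarrow> x \<in> V \<and> y \<in> V)
     \<and> (\<forall>x y. E x y \<longrightarrow> E y x) \<and> (\<forall>x. \<not> E x x)"

text \<open>Small pattern graphs on vertex set {0..<h}, given by an undirected edge list.\<close>
definition mk_graph :: "(nat \<times> nat) set \<Rightarrow> nat \<Rightarrow> nat \<Rightarrow> bool" where
  "mk_graph es u v \<longleftrightarrow> (u, v) \<in> es \<or> (v, u) \<in> es"

definition compl4 :: "(nat \<Rightarrow> nat \<Rightarrow> bool) \<Rightarrow> nat \<Rightarrow> nat \<Rightarrow> bool" where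
  "compl4 F u v \<longleftrightarrow> u < 4 \<and> v < 4 \<and> u \<noteq> v \<and> \<not> F u v"

definition K4 :: "nat \<Rightarrow> nat \<Rightarrow> bool" where
  "K4 = mk_graph {(0,1),(0,2),(0,3),(1,2),(1,3),(2,3)}"
definition D4 :: "nat \<Rightarrow> nat \<Rightarrow> bool" where
  "D4 = mk_graph {(0,2),(0,3),(1,2),(1,3),(2,3)}"
definition P3 :: "nat \<Rightarrow> nat \<Rightarrow> bool" where
  "P3 = mk_graph {(0,1),(1,2)}"
definition C4 :: "nat \<Rightarrow> nat \<Rightarrow> bool" where
  "C4 = mk_graph {(0,1),(1,2),(2,3),(3,0)}"
definition P4 :: "nat \<Rightarrow> nat \<Rightarrow> bool" where
  "P4 = mk_graph {(0,1),(1,2),(2,3)}"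
definition K13 :: "nat \<Rightarrow> nat \<Rightarrow> bool" where
  "K13 = mk_graph {(0,1),(0,2),(0,3)}"
definition K2 :: "nat \<Rightarrow> nat \<Rightarrow> bool" where
  "K2 = mk_graph {(0,1)}"

definition induced_iso :: "('a \<Rightarrow> 'a \<Rightarrow> bool) \<Rightarrow> 'a set \<Rightarrow> (nat \<Rightarrow> nat \<Rightarrow> bool) \<Rightarrow> nat \<Rightarrow> bool" where
  "induced_iso E S F h \<longleftrightarrow>
     (\<exists>f. bij_betw f S {0..<h} \<and> (\<forall>x\<in>S. \<forall>y\<in>S. E x y \<longleftrightarrow> F (f x) (f y)))"

definition p_dens :: "(nat \<Rightarrow> nat \<Rightarrow> bool) \<Rightarrow> nat \<Rightarrow> 'a set \<Rightarrow> ('a \<Rightarrow> 'a \<Rightarrow> bool) \<Rightarrow> real" where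
  "p_dens F h V E =
     real (card {S. S \<subseteq> V \<and> card S = h \<and> induced_iso E S F h}) / real (card V choose h)"

definition t_inj :: "(nat \<Rightarrow> nat \<Rightarrow> bool) \<Rightarrow> nat \<Rightarrow> 'a set \<Rightarrow> ('a \<Rightarrow> 'a \<Rightarrow> bool) \<Rightarrow> real" where
  "t_inj F h V E =
     real (card {g \<in> {0..<h} \<rightarrow>\<^sub>E V. inj_on g {0..<h} \<and>
                  (\<forall>u\<in>{0..<h}. \<forall>v\<in>{0..<h}. F u v \<longrightarrow> E (g u) (g v))})
     / (\<Prod>i<h. (real (card V) - real i))"

definition weighted4 :: "'a set \<Rightarrow> ('a \<Rightarrow> 'a \<Rightarrow> bool) \<Rightarrow> real" where
  "weighted4 V E =
       1 * p_dens K4 4 V E + 1/2 * p_dens (compl4 K4) 4 V E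
     + 5/12 * p_dens D4 4 V E + 5/12 * p_dens (compl4 D4) 4 V E
     + 1/3 * p_dens P3 4 V E + 1/6 * p_dens (compl4 P3) 4 V E
     + 1/2 * p_dens C4 4 V E + 1/3 * p_dens (compl4 C4) 4 V E
     + 1/4 * p_dens K13 4 V E + 1/4 * p_dens (compl4 K13) 4 V E
     + 1/4 * p_dens P4 4 V E"

definition phi :: "'a set \<Rightarrow> ('a \<Rightarrow> 'a \<Rightarrow> bool) \<Rightarrow> real" where
  "phi V E = 2 * t_inj C4 4 V E - t_inj K2 2 V E + 3/8"

end

theory Submission
  imports Defs "HOL-Combinatorics.Multiset_Permutations"
begin

text \<open>Both sides are averages over the 4-vertex subsets S of the graph. The density p(H,G) is
  the fraction of such S inducing a copy of H, and t_inj(F,G) is the number of injective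
  homomorphisms into S, averaged over S and divided by 4! (for K_2 after padding it with two
  isolated vertices, which does not change t_inj). On a single 4-set the weighted indicator sum
  equals 1/2 + (2 hom(C_4,S) - hom(K_2,S))/48, as one checks on all 64 labelled graphs on four
  vertices. Averaging gives weighted4 = 5/16 + phi/2, whence the equivalence.\<close>

definition inj_homs :: "(nat \<Rightarrow> nat \<Rightarrow> bool) \<Rightarrow> nat \<Rightarrow> 'a set \<Rightarrow> ('a \<Rightarrow> 'a \<Rightarrow> bool) \<Rightarrow> (nat \<Rightarrow> 'a) set" where
  "inj_homs F h V E = {g \<in> {0..<h} \<rightarrow>\<^sub>E V. inj_on g {0..<h} \<and>
                         (\<forall>u\<in>{0..<h}. \<forall>v\<in>{0..<h}. F u v \<longrightarrow> E (g u) (g v))}"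

lemma finite_inj_homs: "finite V \<Longrightarrow> finite (inj_homs F h V E)"
  by (simp add: inj_homs_def finite_PiE)

lemma image_inj_homs_eq:
  assumes "g \<in> inj_homs F h S E" "finite S" "card S = h"
  shows "g ` {0..<h} = S"
  using assms card_subset_eq[of S "g ` {0..<h}"] by (auto simp: inj_homs_def card_image)

lemma card_inj_homs_eq_sum_subsets:
  assumes "finite V"
  shows "card (inj_homs F h V E) = (\<Sum>S | S \<subseteq> V \<and> card S = h. card (inj_homs F h S E))"
proof -
  let ?T = "{S. S \<subseteq> V \<and> card S = h}"
  have fiber: "{g \<in> inj_homs F h V E. g ` {0..<h} = S} = inj_homs F h S E" if "S \<in> ?T" for S
  proof -
    have "finite S" using that assms finite_subset by blast
    then show ?thesis using that image_inj_homs_eq[of _ F h S E]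
      by (auto simp: inj_homs_def PiE_iff)
  qed
  have "(\<lambda>g. g ` {0..<h}) ` inj_homs F h V E \<subseteq> ?T"
    by (auto simp: inj_homs_def card_image)
  then have "card (inj_homs F h V E) = (\<Sum>S\<in>?T. card {g \<in> inj_homs F h V E. g ` {0..<h} = S})"
    using sum.group[of "inj_homs F h V E" ?T "\<lambda>g. g ` {0..<h}" "\<lambda>_. 1::nat"] assms
    by (simp add: finite_inj_homs)
  also have "\<dots> = (\<Sum>S\<in>?T. card (inj_homs F h S E))"
    by (rule sum.cong) (simp_all add: fiber)
  finally show ?thesis .
qed

lemma inj_homs_SucI:
  assumes F: "\<And>u v. F u v \<Longrightarrow> u < k \<and> v < k"
    and g: "g \<in> inj_homs F k V E" and x: "x \<in> V - g ` {0..<k}"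
  shows "g(k := x) \<in> inj_homs F (Suc k) V E"
proof -
  have "g(k := x) \<in> {0..<Suc k} \<rightarrow>\<^sub>E V"
    using g x by (simp add: inj_homs_def atLeast0_lessThan_Suc PiE_fun_upd)
  moreover have "inj_on (g(k := x)) {0..<Suc k}"
    using g x by (simp add: inj_homs_def atLeast0_lessThan_Suc inj_on_fun_updI)
  moreover have "\<forall>u\<in>{0..<Suc k}. \<forall>v\<in>{0..<Suc k}. F u v \<longrightarrow> E ((g(k := x)) u) ((g(k := x)) v)"
    using g F by (auto simp: inj_homs_def)
  ultimately show ?thesis by (simp add: inj_homs_def)
qed

lemma inj_homs_SucD:
  assumes G: "G \<in> inj_homs F (Suc k) V E"
  shows "G(k := undefined) \<in> inj_homs F k V E" "G k \<in> V - G ` {0..<k}"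
proof -
  have "G \<in> insert k {0..<k} \<rightarrow>\<^sub>E V" "inj_on G (insert k {0..<k})"
    using G by (simp_all add: inj_homs_def atLeast0_lessThan_Suc)
  moreover have "inj_on (G(k := undefined)) {0..<k}"
    using G by (auto simp: inj_homs_def inj_on_def)
  ultimately show "G(k := undefined) \<in> inj_homs F k V E" "G k \<in> V - G ` {0..<k}"
    using G by (auto simp: inj_homs_def fun_upd_in_PiE)
qed

lemma card_inj_homs_Suc:
  assumes "finite V" and F: "\<And>u v. F u v \<Longrightarrow> u < k \<and> v < k"
  shows "card (inj_homs F (Suc k) V E) = card (inj_homs F k V E) * (card V - k)"
proof -
  let ?ext = "\<lambda>(g, x). g(k := x)"
  let ?\<Sigma> = "SIGMA g:inj_homs F k V E. V - g ` {0..<k}"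
  have inj: "inj_on ?ext ?\<Sigma>"
  proof (rule inj_onI, clarsimp)
    fix g x g' x'
    assume "g \<in> inj_homs F k V E" "g' \<in> inj_homs F k V E" and eq: "g(k := x) = g'(k := x')"
    then have "g k = undefined" "g' k = undefined"
      by (auto simp: inj_homs_def PiE_def extensional_def)
    then have "g = (g(k := x))(k := undefined)" by (simp add: fun_upd_idem)
    also have "\<dots> = (g'(k := x'))(k := undefined)" using eq by simp
    also have "\<dots> = g'" using \<open>g' k = undefined\<close> by (simp add: fun_upd_idem)
    finally show "g = g' \<and> x = x'" using fun_upd_eqD[OF eq] by simp
  qed
  have image: "?ext ` ?\<Sigma> = inj_homs F (Suc k) V E"
  proof
    show "?ext ` ?\<Sigma> \<subseteq> inj_homs F (Suc k) V E"
      by (auto intro!: inj_homs_SucI[of F k, OF F])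
    show "inj_homs F (Suc k) V E \<subseteq> ?ext ` ?\<Sigma>"
    proof
      fix G assume G: "G \<in> inj_homs F (Suc k) V E"
      have "G(k := undefined) ` {0..<k} = G ` {0..<k}" by auto
      then show "G \<in> ?ext ` ?\<Sigma>"
        using inj_homs_SucD[OF G] by (intro image_eqI[where x = "(G(k := undefined), G k)"]) auto
    qed
  qed
  have fibers: "card (V - g ` {0..<k}) = card V - k" if "g \<in> inj_homs F k V E" for g
  proof -
    have "g ` {0..<k} \<subseteq> V" "card (g ` {0..<k}) = k"
      using that by (auto simp: inj_homs_def card_image)
    then show ?thesis using assms(1) by (simp add: card_Diff_subset finite_subset)
  qed
  have "card (inj_homs F (Suc k) V E) = card ?\<Sigma>"
    using card_image[OF inj] image by simp
  also have "\<dots> = (\<Sum>g\<in>inj_homs F k V E. card (V - g ` {0..<k}))"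
    using assms(1) by (simp add: finite_inj_homs)
  also have "\<dots> = card (inj_homs F k V E) * (card V - k)"
    using fibers by simp
  finally show ?thesis .
qed

lemma t_inj_eq_card_inj_homs:
  "t_inj F h V E = card (inj_homs F h V E) / (\<Prod>i<h. real (card V) - real i)"
  by (simp add: t_inj_def inj_homs_def)

lemma prod_falling_eq_fact_choose: "(\<Prod>i<k. real n - real i) = fact k * real (n choose k)"
  by (simp add: binomial_gbinomial gbinomial_prod_rev atLeast0LessThan)

lemma t_inj_Suc:
  assumes "finite V" "k < card V" and "\<And>u v. F u v \<Longrightarrow> u < k \<and> v < k"
  shows "t_inj F (Suc k) V E = t_inj F k V E"
  using assms by (simp add: t_inj_eq_card_inj_homs card_inj_homs_Suc)

lemma t_inj_eq_average:
  assumes "finite V"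
  shows "t_inj F h V E = (\<Sum>S | S \<subseteq> V \<and> card S = h. real (card (inj_homs F h S E)))
                          / (fact h * real (card V choose h))"
  using assms by (simp add: t_inj_eq_card_inj_homs card_inj_homs_eq_sum_subsets prod_falling_eq_fact_choose)

lemma p_dens_eq_average:
  assumes "finite V"
  shows "p_dens F h V E = (\<Sum>S | S \<subseteq> V \<and> card S = h. of_bool (induced_iso E S F h))
                          / real (card V choose h)"
proof -
  have "finite {S. S \<subseteq> V \<and> card S = h}" using assms by simp
  then show ?thesis
    by (simp add: p_dens_def sum.If_cases Int_def)
qed

lemma bij_betw_nth_permutations_of_set:
  assumes "xs \<in> permutations_of_set S"
  shows "bij_betw ((!) xs) {0..<card S} S"
  using assms by (intro bij_betw_nth) (auto simp: permutations_of_set_def distinct_card atLeast0LessThan)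

lemma map_upt_in_permutations_of_set:
  assumes "bij_betw g {0..<h} S"
  shows "map g [0..<h] \<in> permutations_of_set S"
  using assms by (auto simp: permutations_of_set_def bij_betw_def distinct_map)

lemma induced_iso_iff_permutation:
  assumes "finite S" "card S = h"
  shows "induced_iso E S F h \<longleftrightarrow>
           (\<exists>xs\<in>permutations_of_set S. \<forall>u<h. \<forall>v<h. E (xs ! u) (xs ! v) \<longleftrightarrow> F u v)"
proof
  assume "induced_iso E S F h"
  then obtain f where f: "bij_betw f S {0..<h}" and iso: "\<forall>x\<in>S. \<forall>y\<in>S. E x y \<longleftrightarrow> F (f x) (f y)"
    unfolding induced_iso_def by blast
  let ?g = "inv_into S f"
  have g: "bij_betw ?g {0..<h} S" using f by (rule bij_betw_inv_into)
  have "E (?g u) (?g v) \<longleftrightarrow> F u v" if "u < h" "v < h" for u v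
    using iso bij_betw_apply[OF g] bij_betw_inv_into_right[OF f] that by simp
  then show "\<exists>xs\<in>permutations_of_set S. \<forall>u<h. \<forall>v<h. E (xs ! u) (xs ! v) \<longleftrightarrow> F u v"
    using map_upt_in_permutations_of_set[OF g] by (intro bexI[of _ "map ?g [0..<h]"]) auto
next
  assume "\<exists>xs\<in>permutations_of_set S. \<forall>u<h. \<forall>v<h. E (xs ! u) (xs ! v) \<longleftrightarrow> F u v"
  then obtain xs where xs: "xs \<in> permutations_of_set S" and iso: "\<forall>u<h. \<forall>v<h. E (xs ! u) (xs ! v) \<longleftrightarrow> F u v"
    by blast
  have g: "bij_betw ((!) xs) {0..<h} S"
    using bij_betw_nth_permutations_of_set[OF xs] assms(2) by simp
  let ?f = "inv_into {0..<h} ((!) xs)"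
  have "bij_betw ?f S {0..<h}" using g by (rule bij_betw_inv_into)
  moreover have "E x y \<longleftrightarrow> F (?f x) (?f y)" if "x \<in> S" "y \<in> S" for x y
    using iso bij_betw_apply[OF calculation] bij_betw_inv_into_right[OF g] that by (metis atLeastLessThan_iff)
  ultimately show "induced_iso E S F h"
    unfolding induced_iso_def by blast
qed

lemma bij_betw_inj_homs_permutations:
  assumes "finite S" "card S = h"
  shows "bij_betw (\<lambda>g. map g [0..<h]) (inj_homs F h S E)
           {xs \<in> permutations_of_set S. \<forall>u<h. \<forall>v<h. F u v \<longrightarrow> E (xs ! u) (xs ! v)}"
proof (rule bij_betw_byWitness[where f' = "\<lambda>xs. restrict ((!) xs) {0..<h}"])
  show "\<forall>g\<in>inj_homs F h S E. restrict ((!) (map g [0..<h])) {0..<h} = g"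
    by (auto simp: inj_homs_def fun_eq_iff PiE_def extensional_def)
  have length: "length xs = h" if "xs \<in> permutations_of_set S" for xs
    using that assms(2) by (simp add: length_finite_permutations_of_set)
  then show "\<forall>xs\<in>{xs \<in> permutations_of_set S. \<forall>u<h. \<forall>v<h. F u v \<longrightarrow> E (xs ! u) (xs ! v)}.
               map (restrict ((!) xs) {0..<h}) [0..<h] = xs"
    by (auto intro: nth_equalityI)
  show "(\<lambda>g. map g [0..<h]) ` inj_homs F h S E
          \<subseteq> {xs \<in> permutations_of_set S. \<forall>u<h. \<forall>v<h. F u v \<longrightarrow> E (xs ! u) (xs ! v)}"
  proof clarify
    fix g assume g: "g \<in> inj_homs F h S E"
    then have "bij_betw g {0..<h} S"
      using image_inj_homs_eq[OF g assms] by (simp add: inj_homs_def bij_betw_def)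
    then show "map g [0..<h] \<in> permutations_of_set S \<and>
               (\<forall>u<h. \<forall>v<h. F u v \<longrightarrow> E (map g [0..<h] ! u) (map g [0..<h] ! v))"
      using g by (simp add: map_upt_in_permutations_of_set inj_homs_def)
  qed
  show "(\<lambda>xs. restrict ((!) xs) {0..<h}) ` {xs \<in> permutations_of_set S. \<forall>u<h. \<forall>v<h. F u v \<longrightarrow> E (xs ! u) (xs ! v)}
          \<subseteq> inj_homs F h S E"
  proof clarify
    fix xs assume xs: "xs \<in> permutations_of_set S" "\<forall>u<h. \<forall>v<h. F u v \<longrightarrow> E (xs ! u) (xs ! v)"
    have "bij_betw ((!) xs) {0..<h} S"
      using bij_betw_nth_permutations_of_set[OF xs(1)] assms(2) by simp
    then show "restrict ((!) xs) {0..<h} \<in> inj_homs F h S E"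
      using xs(2) by (auto simp: inj_homs_def bij_betw_def inj_on_def)
  qed
qed

lemma permutations_of_set_list_4:
  assumes "distinct [a, b, c, d]"
  shows "permutations_of_set_list [a, b, c, d] =
           [[d, c, b, a], [c, d, b, a], [d, b, c, a], [b, d, c, a], [c, b, d, a], [b, c, d, a],
            [d, c, a, b], [c, d, a, b], [d, a, c, b], [a, d, c, b], [c, a, d, b], [a, c, d, b],
            [d, b, a, c], [b, d, a, c], [d, a, b, c], [a, d, b, c], [b, a, d, c], [a, b, d, c],
            [c, b, a, d], [b, c, a, d], [c, a, b, d], [a, c, b, d], [b, a, c, d], [a, b, c, d]]"
  using assms
  by (simp add: permutations_of_set_list_def permutations_of_set_aux_list.simps
        eq_commute[of b a] eq_commute[of c a] eq_commute[of d a]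
        eq_commute[of c b] eq_commute[of d b] eq_commute[of d c])

definition weighted4_indicator :: "'a set \<Rightarrow> ('a \<Rightarrow> 'a \<Rightarrow> bool) \<Rightarrow> real" where
  "weighted4_indicator S E =
       1 * of_bool (induced_iso E S K4 4) + 1/2 * of_bool (induced_iso E S (compl4 K4) 4)
     + 5/12 * of_bool (induced_iso E S D4 4) + 5/12 * of_bool (induced_iso E S (compl4 D4) 4)
     + 1/3 * of_bool (induced_iso E S P3 4) + 1/6 * of_bool (induced_iso E S (compl4 P3) 4)
     + 1/2 * of_bool (induced_iso E S C4 4) + 1/3 * of_bool (induced_iso E S (compl4 C4) 4)
     + 1/4 * of_bool (induced_iso E S K13 4) + 1/4 * of_bool (induced_iso E S (compl4 K13) 4)
     + 1/4 * of_bool (induced_iso E S P4 4)"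

lemma weighted4_indicator_eq:
  assumes sym: "\<And>x y. E x y \<Longrightarrow> E y x" and irrefl: "\<And>x. \<not> E x x" and S: "card S = 4"
  shows "weighted4_indicator S E
           = 1/2 + (2 * real (card (inj_homs C4 4 S E)) - real (card (inj_homs K2 4 S E))) / 48"
proof -
  have fin: "finite S" using S by (intro card_ge_0_finite) simp
  obtain xs where "xs \<in> permutations_of_set S" using fin by fastforce
  then have "distinct xs" "set xs = S" "length xs = 4"
    using S by (auto simp: permutations_of_set_def distinct_card)
  then obtain a b c d where abcd: "distinct [a, b, c, d]" "S = {a, b, c, d}"
    by (auto simp: numeral_eq_Suc length_Suc_conv)
  define L where "L = permutations_of_set_list [a, b, c, d]"
  have perms: "permutations_of_set S = set L" and "distinct L"
    using permutations_of_list[of "[a, b, c, d]"] distinct_permutations_of_set_list[OF abcd(1)] abcd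
    by (simp_all add: L_def)
  have iso: "induced_iso E S F 4
               \<longleftrightarrow> (\<exists>xs\<in>set L. \<forall>u<4. \<forall>v<4. E (xs ! u) (xs ! v) \<longleftrightarrow> F u v)" for F
    using induced_iso_iff_permutation[OF fin S] perms by simp
  have homs: "card (inj_homs F 4 S E)
                = length (filter (\<lambda>xs. \<forall>u<4. \<forall>v<4. F u v \<longrightarrow> E (xs ! u) (xs ! v)) L)" for F
    using bij_betw_same_card[OF bij_betw_inj_homs_permutations[OF fin S]] perms
      distinct_card[OF distinct_filter[OF \<open>distinct L\<close>]] by (simp add: set_filter)
  have E_sym: "E b a = E a b" "E c a = E a c" "E d a = E a d" "E c b = E b c" "E d b = E b d" "E d c = E c d"
    using sym by blast+
  show ?thesis
    unfolding weighted4_indicator_def iso homs L_def permutations_of_set_list_4[OF abcd(1)]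
    using abcd(1) irrefl
    by (cases "E a b"; cases "E a c"; cases "E a d"; cases "E b c"; cases "E b d"; cases "E c d")
       (simp_all add: numeral_eq_Suc All_less_Suc E_sym
         K4_def D4_def P3_def C4_def P4_def K13_def K2_def compl4_def mk_graph_def)
qed

lemma weighted4_eq_average:
  assumes "finite V"
  shows "weighted4 V E = (\<Sum>S | S \<subseteq> V \<and> card S = 4. weighted4_indicator S E) / real (card V choose 4)"
  unfolding weighted4_def weighted4_indicator_def p_dens_eq_average[OF assms]
    sum.distrib sum_distrib_left[symmetric]
  by (simp only: add_divide_distrib times_divide_eq_right)

lemma weighted4_eq_phi:
  assumes "simple_graph V E" "card V \<ge> 4"
  shows "weighted4 V E = 5/16 + phi V E / 2"
proof -
  have fin: "finite V" and sym: "\<And>x y. E x y \<Longrightarrow> E y x" and irrefl: "\<And>x. \<not> E x x"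
    using assms(1) by (auto simp: simple_graph_def)
  let ?T = "{S. S \<subseteq> V \<and> card S = 4}"
  let ?C = "real (card V choose 4)"
  let ?hom = "\<lambda>F S. real (card (inj_homs F 4 S E))"
  have "?C > 0" using assms(2) by simp
  have "card ?T = card V choose 4" using n_subsets[OF fin] by simp
  have K2_edges: "K2 u v \<Longrightarrow> u < k \<and> v < k" if "2 \<le> k" for u v k
    using that by (auto simp: K2_def mk_graph_def)
  have K2_padded: "t_inj K2 2 V E = t_inj K2 4 V E"
    using t_inj_Suc[OF fin _ K2_edges, of 2] t_inj_Suc[OF fin _ K2_edges, of 3] assms(2) by simp
  have "weighted4 V E = (\<Sum>S\<in>?T. weighted4_indicator S E) / ?C"
    by (rule weighted4_eq_average[OF fin])
  also have "\<dots> = (\<Sum>S\<in>?T. 1/2 + (2 * ?hom C4 S - ?hom K2 S) / 48) / ?C"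
    using weighted4_indicator_eq[where E = E, OF sym irrefl]
    by (intro arg_cong[where f = "\<lambda>x. x / ?C"] sum.cong) auto
  also have "\<dots> = 1/2 + (2 * (\<Sum>S\<in>?T. ?hom C4 S) - (\<Sum>S\<in>?T. ?hom K2 S)) / (48 * ?C)"
    using \<open>?C > 0\<close> \<open>card ?T = card V choose 4\<close>
    by (simp add: sum.distrib sum_subtractf sum_distrib_left sum_divide_distrib[symmetric] field_simps)
  also have "\<dots> = 5/16 + phi V E / 2"
    using \<open>?C > 0\<close> unfolding phi_def K2_padded unfolding t_inj_eq_average[OF fin]
    by (simp add: fact_numeral field_simps)
  finally show ?thesis .
qed

theorem lemma2p1:
  fixes V :: "'a set" and E :: "'a \<Rightarrow> 'a \<Rightarrow> bool"
  assumes "simple_graph V E" and "card V \<ge> 4"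
  shows "weighted4 V E \<le> 5/16 \<longleftrightarrow> phi V E \<le> 0"
  using weighted4_eq_phi[OF assms] by simp

end
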